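(* Let $X$ be a proper metric space, $W\subset X$ a closed subset, $g:W\to\mathbb R$ a function, and $f_n:X\to\mathbb R_+$ ($n=1,2,\dots$) coarsely proper functions with $f_n|_W\ge g$ for all $n$. Then there exist bounded subsets $A_n\subset X$ and a coarsely proper function $f:X\to\mathbb R_+$ such that $f|_W\ge g$, and for every $n$: $f(x)\le n$ for $x\in A_n$ and $f(x)\le f_n(x)$ for $x\in X\setminus A_n$.
   Context: $\mathbb R_+=[0,\infty)$. A function is coarsely proper if preimages of bounded sets are bounded (functions need not be continuous). *)

theory Defs
  imports "HOL-Analysis.Analysis"
begin

definition coarsely_proper :: "('a::metric_space \<Rightarrow> real) \<Rightarrow> bool" where
  "coarsely_proper f \<longleftrightarrow> (\<forall>B. bounded B \<longrightarrow> bounded (f -` B))"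

end

theory Submission
  imports Defs
begin

text \<open>The function \<open>f x = inf\<^sub>n max n (F\<^sub>n x)\<close> does the job with \<open>A\<^sub>n = {F\<^sub>n \<le> n}\<close>.
  Indeed \<open>f \<le> max n F\<^sub>n\<close> for every \<open>n\<close>, which gives both bounds, and \<open>f \<ge> g\<close> on \<open>W\<close>
  because every \<open>F\<^sub>n\<close> is. Since \<open>max n F\<^sub>n \<ge> n\<close>, the value \<open>f x \<le> r\<close> is
  witnessed by some \<open>n \<le> r + 1\<close> with \<open>F\<^sub>n x \<le> r + 1\<close>, so sublevel sets of \<open>f\<close>
  lie in finitely many sublevel sets of the \<open>F\<^sub>n\<close> and \<open>f\<close> is coarsely proper.\<close>

lemma coarsely_proper_iff_bounded_sublevels:
  fixes f :: "'a::metric_space \<Rightarrow> real"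
  shows "coarsely_proper f \<longleftrightarrow> (\<forall>r. bounded {x. \<bar>f x\<bar> \<le> r})"
proof
  assume "coarsely_proper f"
  show "\<forall>r. bounded {x. \<bar>f x\<bar> \<le> r}"
  proof
    fix r :: real
    have "{x. \<bar>f x\<bar> \<le> r} = f -` {-r..r}"
      by auto
    then show "bounded {x. \<bar>f x\<bar> \<le> r}"
      using \<open>coarsely_proper f\<close> unfolding coarsely_proper_def by simp
  qed
next
  assume sublevels: "\<forall>r. bounded {x. \<bar>f x\<bar> \<le> r}"
  show "coarsely_proper f"
    unfolding coarsely_proper_def
  proof (intro allI impI)
    fix B :: "real set"
    assume "bounded B"
    then obtain r where "\<forall>y\<in>B. \<bar>y\<bar> \<le> r"
      using bounded_real by blast
    then have "f -` B \<subseteq> {x. \<bar>f x\<bar> \<le> r}"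
      by auto
    then show "bounded (f -` B)"
      using sublevels bounded_subset by blast
  qed
qed

definition inf_max_index :: "(nat \<Rightarrow> 'a \<Rightarrow> real) \<Rightarrow> 'a \<Rightarrow> real" where
  "inf_max_index F x = (INF n\<in>{1..}. max (real n) (F n x))"

lemma bdd_below_max_index: "bdd_below ((\<lambda>n. max (real n) (F n x)) ` {1..})"
  by (rule bdd_belowI[where m = 0]) auto

lemma inf_max_index_le: "n \<ge> 1 \<Longrightarrow> inf_max_index F x \<le> max (real n) (F n x)"
  unfolding inf_max_index_def by (rule cINF_lower[OF bdd_below_max_index]) simp

lemma inf_max_index_greatest:
  "(\<And>n. n \<ge> 1 \<Longrightarrow> c \<le> max (real n) (F n x)) \<Longrightarrow> c \<le> inf_max_index F x"
  unfolding inf_max_index_def by (rule cINF_greatest) auto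

lemma inf_max_index_nonneg: "0 \<le> inf_max_index F x"
  by (rule inf_max_index_greatest) simp

lemma inf_max_index_less_iff:
  "inf_max_index F x < r \<longleftrightarrow> (\<exists>n\<ge>1. real n < r \<and> F n x < r)"
proof -
  have nonempty: "{1::nat..} \<noteq> {}"
    by auto
  show ?thesis
    unfolding inf_max_index_def cINF_less_iff[OF nonempty bdd_below_max_index] by auto
qed

lemma coarsely_proper_inf_max_index:
  fixes F :: "nat \<Rightarrow> 'a::metric_space \<Rightarrow> real"
  assumes nonneg: "\<forall>n\<ge>1. \<forall>x. F n x \<ge> 0"
    and proper: "\<forall>n\<ge>1. coarsely_proper (F n)"
  shows "coarsely_proper (inf_max_index F)"
  unfolding coarsely_proper_iff_bounded_sublevels
proof
  fix r :: real
  define N where "N = nat \<lceil>r + 1\<rceil>"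
  have "{x. \<bar>inf_max_index F x\<bar> \<le> r} \<subseteq> (\<Union>n\<in>{1..N}. {x. \<bar>F n x\<bar> \<le> r + 1})"
  proof
    fix x
    assume "x \<in> {x. \<bar>inf_max_index F x\<bar> \<le> r}"
    then have "inf_max_index F x < r + 1"
      by simp
    then obtain n where "n \<ge> 1" "real n < r + 1" "F n x < r + 1"
      unfolding inf_max_index_less_iff by blast
    moreover have "n \<le> N"
      using \<open>real n < r + 1\<close> unfolding N_def by linarith
    moreover have "\<bar>F n x\<bar> \<le> r + 1"
      using nonneg \<open>n \<ge> 1\<close> \<open>F n x < r + 1\<close> by fastforce
    ultimately show "x \<in> (\<Union>n\<in>{1..N}. {x. \<bar>F n x\<bar> \<le> r + 1})"
      by auto
  qed
  moreover have "bounded (\<Union>n\<in>{1..N}. {x. \<bar>F n x\<bar> \<le> r + 1})"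
    using proper unfolding coarsely_proper_iff_bounded_sublevels by (intro bounded_UN) auto
  ultimately show "bounded {x. \<bar>inf_max_index F x\<bar> \<le> r}"
    using bounded_subset by blast
qed

theorem proposition7p5:
  fixes W :: "'a::metric_space set"
    and g :: "'a \<Rightarrow> real"
    and F :: "nat \<Rightarrow> 'a \<Rightarrow> real"
  assumes proper: "\<forall>(x::'a) (e::real). compact (cball x e)"
    and W_closed: "closed W"
    and F_nonneg: "\<forall>n\<ge>1. \<forall>x. F n x \<ge> 0"
    and F_cp: "\<forall>n\<ge>1. coarsely_proper (F n)"
    and F_W: "\<forall>n\<ge>1. \<forall>x\<in>W. F n x \<ge> g x"
  shows "\<exists>(A :: nat \<Rightarrow> 'a set) (f :: 'a \<Rightarrow> real).
           (\<forall>n\<ge>1. bounded (A n)) \<and>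
           (\<forall>x. f x \<ge> 0) \<and> coarsely_proper f \<and>
           (\<forall>x\<in>W. f x \<ge> g x) \<and>
           (\<forall>n\<ge>1. (\<forall>x\<in>A n. f x \<le> real n) \<and> (\<forall>x. x \<notin> A n \<longrightarrow> f x \<le> F n x))"
proof (intro exI conjI)
  let ?A = "\<lambda>n. {x. F n x \<le> real n}"
  let ?f = "inf_max_index F"
  show "\<forall>n\<ge>1. bounded (?A n)"
  proof (intro allI impI)
    fix n :: nat
    assume "n \<ge> 1"
    then have "?A n \<subseteq> {x. \<bar>F n x\<bar> \<le> real n}"
      using F_nonneg by auto
    moreover have "bounded {x. \<bar>F n x\<bar> \<le> real n}"
      using F_cp \<open>n \<ge> 1\<close> unfolding coarsely_proper_iff_bounded_sublevels by simp
    ultimately show "bounded (?A n)"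
      by (rule bounded_subset[rotated])
  qed
  show "\<forall>x. ?f x \<ge> 0"
    by (simp add: inf_max_index_nonneg)
  show "coarsely_proper ?f"
    using F_nonneg F_cp by (rule coarsely_proper_inf_max_index)
  show "\<forall>x\<in>W. ?f x \<ge> g x"
    using F_W by (auto intro!: inf_max_index_greatest intro: max.coboundedI2)
  show "\<forall>n\<ge>1. (\<forall>x\<in>?A n. ?f x \<le> real n) \<and> (\<forall>x. x \<notin> ?A n \<longrightarrow> ?f x \<le> F n x)"
  proof (intro allI impI conjI ballI)
    fix n :: nat and x
    assume "n \<ge> 1"
    then have le_max: "?f x \<le> max (real n) (F n x)"
      by (rule inf_max_index_le)
    show "?f x \<le> real n" if "x \<in> ?A n"
      using le_max that by simp
    show "?f x \<le> F n x" if "x \<notin> ?A n"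
      using le_max that by simp
  qed
qed

end
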